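(* Let $a=1$. Define $\boldsymbol{\alpha}_0=\boldsymbol{\beta}_0=1$ and, for $n\ge1$, \[ \boldsymbol{\alpha}_n(1,k)=(-1)^n q^{-n^2/2}\left(q^{-3n/2}+q^{3n/2}\right),\qquad \boldsymbol{\beta}_n(1,k)=\frac{(-1)^n(1-kq^n+kq^{2n})(k;q)_{n}}{q^{(n^2+3n)/2}(q;q)_n}. \] Then $(\boldsymbol{\alpha}_n(1,k),\boldsymbol{\beta}_n(1,k))$ is a WP-Bailey pair relative to $a=1$.
   Context: Notation: $(x;q)_n=\prod_{i=0}^{n-1}(1-xq^i)$. A pair of sequences $(\boldsymbol{\alpha}_n(a,k,q),\boldsymbol{\beta}_n(a,k,q))_{n\ge0}$ is a WP-Bailey pair (relative to $a$, with parameter $k$) if $\boldsymbol{\alpha}_0=1$ and for all $n\ge0$ \[\boldsymbol{\beta}_n=\sum_{j=0}^n\frac{(k/a;q)_{n-j}(k;q)_{n+j}}{(q;q)_{n-j}(aq;q)_{n+j}}\boldsymbol{\alpha}_j.\] *)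

theory Defs
  imports Complex_Main
begin

definition qpoch :: "'a::comm_ring_1 \<Rightarrow> 'a \<Rightarrow> nat \<Rightarrow> 'a" where
  "qpoch x q n = (\<Prod>i<n. (1 - x * q ^ i))"

definition WP_Bailey_pair ::
  "'a::field \<Rightarrow> 'a \<Rightarrow> 'a \<Rightarrow> (nat \<Rightarrow> 'a) \<Rightarrow> (nat \<Rightarrow> 'a) \<Rightarrow> bool" where
  "WP_Bailey_pair a k q \<alpha> \<beta> \<longleftrightarrow>
     \<alpha> 0 = 1 \<and>
     (\<forall>n. \<beta> n = (\<Sum>j\<le>n. (qpoch (k / a) q (n - j) * qpoch k q (n + j))
                            / (qpoch q q (n - j) * qpoch (a * q) q (n + j)) * \<alpha> j))"

end

theory Submission
  imports Defs "HOL-Computational_Algebra.Polynomial"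
begin

text \<open>Write \<open>T(n,j)\<close> for the summand of the WP-Bailey sum at \<open>a = 1\<close> and \<open>S(n) = \<Sum>j\<le>n. T(n,j)\<close>.
  The proof is by creative telescoping: with explicit recurrence coefficients \<open>D(n)\<close>, \<open>N(n)\<close>
  and an explicit certificate \<open>G(n,j)\<close> (a rational function times \<open>T(n,j)\<close>; these are
  \<open>rec_coeff_hi\<close>, \<open>rec_coeff_lo\<close> and \<open>cert_term\<close>) one has
  \<open>D(n) T(n+1,j) - N(n) T(n,j) = G(n,j+1) - G(n,j)\<close>, so summing over \<open>j\<close> gives
  \<open>D(n) S(n+1) = N(n) S(n)\<close>. The claimed \<open>\<beta>\<^sub>n\<close> satisfies the same recurrence, and both agree at
  \<open>n = 1\<close>. Since \<open>D(n)\<close> vanishes for one value of \<open>k\<close>, the induction step first yields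
  \<open>S(n+1) = \<beta>\<^sub>n\<^sub>+\<^sub>1\<close> for all other \<open>k\<close>; both sides are polynomials in \<open>k\<close> and the field is
  infinite (it contains \<open>q\<close>, which is not a root of unity), so the identity holds for all \<open>k\<close>.\<close>

lemma qpoch_0 [simp]: "qpoch x q 0 = 1"
  by (simp add: qpoch_def)

lemma qpoch_Suc: "qpoch x q (Suc n) = qpoch x q n * (1 - x * q ^ n)"
  by (simp add: qpoch_def)

lemma qpoch_self_nonzero:
  fixes q :: "'a::field"
  assumes "\<And>i::nat. i \<ge> 1 \<Longrightarrow> q ^ i \<noteq> 1"
  shows "qpoch q q m \<noteq> 0"
proof -
  have "1 - q * q ^ i \<noteq> 0" for i
    using assms[of "Suc i"] by simp
  then show ?thesis
    by (simp add: qpoch_def)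
qed

lemma infinite_UNIV_if_not_root_of_unity:
  fixes q :: "'a::field"
  assumes "q \<noteq> 0" and "\<And>i::nat. i \<ge> 1 \<Longrightarrow> q ^ i \<noteq> 1"
  shows "infinite (UNIV :: 'a set)"
proof
  have "q ^ i \<noteq> q ^ j" if "i < j" for i j
  proof
    assume "q ^ i = q ^ j"
    moreover have "q ^ i * q ^ (j - i) = q ^ j"
      using that by (metis le_add_diff_inverse less_imp_le power_add)
    ultimately have "q ^ i * q ^ (j - i) = q ^ i * 1"
      by simp
    then show False
      using assms that by simp
  qed
  then have "inj (\<lambda>i::nat. q ^ i)"
    by (metis injI linorder_neqE_nat)
  moreover assume "finite (UNIV :: 'a set)"
  then have "finite (range (\<lambda>i::nat. q ^ i))"
    by (rule finite_subset[rotated]) simp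
  ultimately show False
    using finite_imageD by blast
qed

subsection \<open>Polynomial functions on a field\<close>

definition poly_fun :: "('a::field \<Rightarrow> 'a) \<Rightarrow> bool" where
  "poly_fun f \<longleftrightarrow> (\<exists>p. \<forall>x. f x = poly p x)"

lemma poly_fun_const: "poly_fun (\<lambda>x. c)"
  unfolding poly_fun_def by (rule exI[of _ "[:c:]"]) simp

lemma poly_fun_id: "poly_fun (\<lambda>x. x)"
  unfolding poly_fun_def by (rule exI[of _ "[:0, 1:]"]) simp

lemma poly_fun_add: "poly_fun f \<Longrightarrow> poly_fun g \<Longrightarrow> poly_fun (\<lambda>x. f x + g x)"
  unfolding poly_fun_def by (metis poly_add)

lemma poly_fun_diff: "poly_fun f \<Longrightarrow> poly_fun g \<Longrightarrow> poly_fun (\<lambda>x. f x - g x)"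
  unfolding poly_fun_def by (metis poly_diff)

lemma poly_fun_mult: "poly_fun f \<Longrightarrow> poly_fun g \<Longrightarrow> poly_fun (\<lambda>x. f x * g x)"
  unfolding poly_fun_def by (metis poly_mult)

lemma poly_fun_divide_const: "poly_fun f \<Longrightarrow> poly_fun (\<lambda>x. f x / c)"
  using poly_fun_mult[OF _ poly_fun_const, of f "inverse c"] by (simp add: divide_inverse)

lemma poly_fun_sum:
  "finite A \<Longrightarrow> (\<And>i. i \<in> A \<Longrightarrow> poly_fun (f i)) \<Longrightarrow> poly_fun (\<lambda>x. \<Sum>i\<in>A. f i x)"
  by (induction A rule: finite_induct) (auto intro: poly_fun_const poly_fun_add)

lemma poly_fun_prod:
  "finite A \<Longrightarrow> (\<And>i. i \<in> A \<Longrightarrow> poly_fun (f i)) \<Longrightarrow> poly_fun (\<lambda>x. \<Prod>i\<in>A. f i x)"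
  by (induction A rule: finite_induct) (auto intro: poly_fun_const poly_fun_mult)

lemma poly_fun_qpoch: "poly_fun (\<lambda>x. qpoch x q m)"
  unfolding qpoch_def
  by (intro poly_fun_prod poly_fun_diff poly_fun_mult poly_fun_const poly_fun_id) simp

lemma poly_fun_eq_0_if_cofinite_zeros:
  fixes f :: "'a::field \<Rightarrow> 'a"
  assumes "infinite (UNIV :: 'a set)" and "poly_fun f" and "finite E"
    and "\<And>x. x \<notin> E \<Longrightarrow> f x = 0"
  shows "f x = 0"
proof -
  obtain p where p: "\<And>x. f x = poly p x"
    using \<open>poly_fun f\<close> unfolding poly_fun_def by blast
  have "p = 0"
  proof (rule ccontr)
    assume "p \<noteq> 0"
    have "UNIV \<subseteq> E \<union> {x. poly p x = 0}"
      using assms(4) p by auto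
    moreover have "finite (E \<union> {x. poly p x = 0})"
      using \<open>finite E\<close> poly_roots_finite[OF \<open>p \<noteq> 0\<close>] by simp
    ultimately show False
      using assms(1) finite_subset by blast
  qed
  then show ?thesis
    using p by simp
qed

subsection \<open>The pair and its certificate\<close>

fun beta_exponent :: "nat \<Rightarrow> nat" where
  "beta_exponent 0 = 0"
| "beta_exponent (Suc n) = beta_exponent n + n + 2"

lemma two_beta_exponent: "2 * beta_exponent n = n ^ 2 + 3 * n"
  by (induction n) (simp_all add: power2_eq_square algebra_simps)

definition alpha_base :: "'a::field \<Rightarrow> nat \<Rightarrow> 'a" where
  "alpha_base q j = (-1) ^ j / q ^ beta_exponent j"

definition pair_alpha :: "'a::field \<Rightarrow> nat \<Rightarrow> 'a" where
  "pair_alpha q j = (if j = 0 then 1 else alpha_base q j * (1 + q ^ (3 * j)))"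

definition pair_beta :: "'a::field \<Rightarrow> 'a \<Rightarrow> nat \<Rightarrow> 'a" where
  "pair_beta q k n = (if n = 0 then 1
     else (-1) ^ n * (1 - k * q ^ n + k * q ^ (2 * n)) * qpoch k q n
          / (q ^ beta_exponent n * qpoch q q n))"

definition pair_term :: "'a::field \<Rightarrow> 'a \<Rightarrow> nat \<Rightarrow> nat \<Rightarrow> 'a" where
  "pair_term q k n j = qpoch k q (n - j) * qpoch k q (n + j)
     / (qpoch q q (n - j) * qpoch q q (n + j)) * pair_alpha q j"

definition rec_coeff_hi :: "'a::field \<Rightarrow> 'a \<Rightarrow> nat \<Rightarrow> 'a" where
  "rec_coeff_hi q k n = (1 - k * q ^ n + k * (q ^ n) ^ 2) * (q ^ 2 * q ^ n) * (1 - q * q ^ n)"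

definition rec_coeff_lo :: "'a::field \<Rightarrow> 'a \<Rightarrow> nat \<Rightarrow> 'a" where
  "rec_coeff_lo q k n = - ((1 - k * q * q ^ n + k * q ^ 2 * (q ^ n) ^ 2) * (1 - k * q ^ n))"

definition cert_poly :: "'a::field \<Rightarrow> 'a \<Rightarrow> 'a \<Rightarrow> 'a \<Rightarrow> 'a" where
  "cert_poly q k x y = (k*q*y - k^2*q*y^2 - k^3*(q^3*y^5-q^2*y^4))
     + x*(-q + k*(q^2*y^2-q*y^2) + k^2*(q^2*y^4-q^2*y^3+y^2) + k^3*(q^3*y^5-q*y^4))
     + x^2*((-(q^2*y)+q*y+q) + k*(q^3*y^3-q^2*y^3) - k^2*(q^3*y^4-q*y^3+y^2) - k^3*(q^2*y^5-q*y^4))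
     + x^3*(-1+k*y+k^2*(q^2*y^4-q*y^3))"

text \<open>The general formula for \<open>\<alpha>\<^sub>j\<close> would give \<open>2\<close> at \<open>j = 0\<close>, so the telescoping
  cannot start from \<open>G(n,0)\<close>; it starts from \<open>G(n,1)\<close>, and \<open>G(n,0)\<close> is set to \<open>0\<close>.\<close>
definition cert_term :: "'a::field \<Rightarrow> 'a \<Rightarrow> nat \<Rightarrow> nat \<Rightarrow> 'a" where
  "cert_term q k n j = (if j = 0 then 0
     else cert_poly q k (q ^ j) (q ^ n) * qpoch k q (n - j) * qpoch k q (n + j)
          / (qpoch q q (n + 1 - j) * qpoch q q (n + j)) * alpha_base q j)"

lemma alpha_base_Suc: "q \<noteq> 0 \<Longrightarrow> alpha_base q (Suc j) = - alpha_base q j / (q ^ 2 * q ^ j)"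
  by (simp add: alpha_base_def power_add field_simps power2_eq_square)

lemma pair_alpha_if_pos: "j \<ge> 1 \<Longrightarrow> pair_alpha q j = alpha_base q j * (1 + (q ^ j) ^ 3)"
  by (simp add: pair_alpha_def mult.commute flip: power_mult)

subsection \<open>The telescoping identities\<close>

lemma cert_identity_bottom:
  fixes a q k :: "'a::field"
  defines "y \<equiv> q * a"
  shows "((1-k*y+k*y^2)*(q^2*y)*(1-q*y)*(1-k*a)^2*(1-k*q*a)^2
          + (1-k*q*y+k*q^2*y^2)*(1-k*y)*(1-k*a)^2*(1-q^2*a)^2)*q^2
     = - cert_poly q k q y*(1-k*a)*(1-k*q*a)*(1-q^2*a)"
  unfolding y_def cert_poly_def by algebra

lemma cert_identity_interior:
  fixes a x q k :: "'a::field"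
  defines "y \<equiv> a * q * x"
  shows "(1-k*y+k*y^2)*(q^2*y)*(1-q*y)*((1-k*a)*(1-k*q*a)*(1-k*a*q*x^2)*(1+x^3))*(q^2*x)
     + (1-k*q*y+k*q^2*y^2)*(1-k*y)*((1-k*a)*(1-q^2*a)*(1-a*q^2*x^2)*(1+x^3))*(q^2*x)
   = - cert_poly q k (q*x) y*(1-k*a*q*x^2)*(1-q^2*a) - cert_poly q k x y*(1-k*a)*(1-a*q^2*x^2)*(q^2*x)"
  unfolding y_def cert_poly_def by algebra

lemma cert_identity_top:
  fixes x q k :: "'a::field"
  shows "(1-k*x+k*x^2)*(q^2*x)*(1-q*x)*((1-k)*(1-k*x^2)*(1+x^3)*(1-q^2*x^2)*(q^2*x)
           - (1-k*x^2)*(1-k*q*x^2)*(1-q)*(1+q^3*x^3))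
       + (1-k*q*x+k*q^2*x^2)*(1-k*x)*(1+x^3)*(1-q)*(1-q*x^2)*(1-q^2*x^2)*(q^2*x)
     = - cert_poly q k x x*(1-q*x^2)*(1-q^2*x^2)*(q^2*x)"
  unfolding cert_poly_def by algebra

lemma telescoping_step_bottom:
  fixes q k :: "'a::field"
  assumes "q \<noteq> 0" and hq: "\<And>i::nat. i \<ge> 1 \<Longrightarrow> q ^ i \<noteq> 1" and n: "n = Suc m"
  shows "rec_coeff_hi q k n * pair_term q k (Suc n) 0 - rec_coeff_lo q k n * pair_term q k n 0
       = cert_term q k n 1 - cert_term q k n 0"
proof -
  define a where "a = q ^ m"
  define y where "y = q * a"
  define E where "E = qpoch k q m"
  define P where "P = qpoch q q n"
  define d where "d = 1 - q^2 * a"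
  define C where "C = E^2 / (P^2 * d^2)"
  have y: "q ^ n = y"
    unfolding y_def a_def n by simp
  have E: "qpoch k q n = E*(1-k*a)" "qpoch k q (Suc n) = E*(1-k*a)*(1-k*q*a)"
    and P: "qpoch q q (Suc n) = P*d"
    unfolding E_def P_def d_def n a_def by (simp_all add: qpoch_Suc power2_eq_square mult_ac)
  have "P \<noteq> 0"
    unfolding P_def using qpoch_self_nonzero[OF hq] .
  have "q ^ Suc (Suc m) \<noteq> 1"
    by (rule hq) simp
  then have "d \<noteq> 0"
    unfolding d_def a_def by (simp add: power2_eq_square mult.assoc)
  have idx: "n - 1 = m" "n + 1 = Suc n" "n + 1 - 1 = n"
    using n by auto
  have T1: "pair_term q k (Suc n) 0 = C * ((1-k*a)^2*(1-k*q*a)^2)"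
    unfolding pair_term_def pair_alpha_def C_def by (simp add: E P power2_eq_square divide_inverse mult_ac)
  have T0: "pair_term q k n 0 = C * ((1-k*a)^2*d^2)"
    using \<open>P \<noteq> 0\<close> \<open>d \<noteq> 0\<close> unfolding pair_term_def pair_alpha_def C_def
    by (simp add: E field_simps flip: P_def) algebra
  have "alpha_base q 1 = - 1 / q^2"
    by (simp add: alpha_base_def numeral_2_eq_2)
  then have G: "cert_term q k n 1 = C * (cert_poly q k q y*(1-k*a)*(1-k*q*a)*d) * (-1/q^2)"
    using \<open>P \<noteq> 0\<close> \<open>d \<noteq> 0\<close> \<open>q \<noteq> 0\<close> unfolding cert_term_def idx y E P
    by (simp add: C_def field_simps flip: E_def P_def) algebra
  have "rec_coeff_hi q k n * pair_term q k (Suc n) 0 - rec_coeff_lo q k n * pair_term q k n 0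
     = C/q^2 * (((1-k*y+k*y^2)*(q^2*y)*(1-q*y)*(1-k*a)^2*(1-k*q*a)^2
          + (1-k*q*y+k*q^2*y^2)*(1-k*y)*(1-k*a)^2*d^2)*q^2)"
    unfolding rec_coeff_hi_def rec_coeff_lo_def y T1 T0 using \<open>q \<noteq> 0\<close> by (simp add: field_simps)
  also have "\<dots> = C/q^2 * (- cert_poly q k q y*(1-k*a)*(1-k*q*a)*d)"
    unfolding y_def d_def by (simp only: cert_identity_bottom)
  also have "\<dots> = cert_term q k n 1 - cert_term q k n 0"
    unfolding G using \<open>q \<noteq> 0\<close> by (simp add: cert_term_def field_simps)
  finally show ?thesis .
qed


lemma telescoping_step_interior:
  fixes q k :: "'a::field"
  assumes "q \<noteq> 0" and hq: "\<And>i::nat. i \<ge> 1 \<Longrightarrow> q ^ i \<noteq> 1"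
    and "1 \<le> j" and n: "n = m + 1 + j"
  shows "rec_coeff_hi q k n * pair_term q k (Suc n) j - rec_coeff_lo q k n * pair_term q k n j
       = cert_term q k n (Suc j) - cert_term q k n j"
proof -
  define a where "a = q ^ m"
  define x where "x = q ^ j"
  define y where "y = a * q * x"
  define E where "E = qpoch k q m"
  define E' where "E' = qpoch k q (n + j)"
  define P where "P = qpoch q q (Suc m)"
  define P' where "P' = qpoch q q (n + j)"
  define d where "d = 1 - q^2 * a"
  define d' where "d' = 1 - a * q^2 * x^2"
  define C where "C = E * E' * alpha_base q j / (P * P' * d * d')"
  have idx: "n - j = Suc m" "Suc n - j = Suc (Suc m)" "n - Suc j = m" "n + 1 - Suc j = Suc m"
    "n + 1 - j = Suc (Suc m)"
    using n by auto
  have pw: "q ^ n = y" "q ^ (n + j) = a * q * x^2" "q ^ Suc m = q * a"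
    unfolding y_def a_def x_def n by (simp_all add: power_add power2_eq_square)
  have E: "qpoch k q (Suc m) = E*(1-k*a)" "qpoch k q (Suc (Suc m)) = E*(1-k*a)*(1-k*q*a)"
      "qpoch k q (Suc (n + j)) = E'*(1-k*a*q*x^2)"
    and P: "qpoch q q (Suc (Suc m)) = P*d" "qpoch q q (Suc (n + j)) = P'*d'"
    unfolding E_def E'_def P_def P'_def d_def d'_def using pw
    by (simp_all add: qpoch_Suc a_def power2_eq_square mult_ac)
  have nz: "P \<noteq> 0" "P' \<noteq> 0" "d \<noteq> 0" "d' \<noteq> 0" "x \<noteq> 0"
  proof -
    show "P \<noteq> 0" "P' \<noteq> 0"
      unfolding P_def P'_def using qpoch_self_nonzero[OF hq] by auto
    have "q ^ Suc (Suc m) \<noteq> 1"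
      by (rule hq) simp
    then show "d \<noteq> 0"
      unfolding d_def by (simp add: a_def power2_eq_square mult.assoc)
    have "q ^ Suc (n + j) \<noteq> 1"
      by (rule hq) simp
    then show "d' \<noteq> 0"
      unfolding d'_def using pw by (simp add: power2_eq_square mult_ac)
    show "x \<noteq> 0"
      using \<open>q \<noteq> 0\<close> by (simp add: x_def)
  qed
  have alpha: "pair_alpha q j = alpha_base q j * (1 + x^3)"
    using \<open>1 \<le> j\<close> by (simp add: pair_alpha_if_pos x_def)
  have alpha_Suc: "alpha_base q (Suc j) = - alpha_base q j / (q^2 * x)"
    using \<open>q \<noteq> 0\<close> by (simp add: alpha_base_Suc x_def)
  note fold = E_def[symmetric] E'_def[symmetric] P_def[symmetric] P'_def[symmetric] x_def[symmetric]
  have T1: "pair_term q k (Suc n) j = C * ((1-k*a)*(1-k*q*a)*(1-k*a*q*x^2)*(1+x^3))"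
    unfolding pair_term_def idx add_Suc E P alpha fold C_def using nz by (simp add: field_simps)
  have T0: "pair_term q k n j = C * ((1-k*a)*d*d'*(1+x^3))"
    unfolding pair_term_def idx E alpha fold C_def using nz by (simp add: field_simps)
  have G1: "cert_term q k n (Suc j) = C * (cert_poly q k (q*x) y*(1-k*a*q*x^2)*d) * (-1/(q^2*x))"
    unfolding cert_term_def idx add_Suc_right E P alpha_Suc pw(1) power_Suc fold C_def
    using nz \<open>q \<noteq> 0\<close> by (simp add: field_simps)
  have G0: "cert_term q k n j = C * (cert_poly q k x y*(1-k*a)*d')"
    unfolding cert_term_def idx E P pw(1) fold C_def
    using nz \<open>q \<noteq> 0\<close> \<open>1 \<le> j\<close> by (simp add: field_simps)
  have "rec_coeff_hi q k n * pair_term q k (Suc n) j - rec_coeff_lo q k n * pair_term q k n j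
     = C/(q^2*x) * ((1-k*y+k*y^2)*(q^2*y)*(1-q*y)*((1-k*a)*(1-k*q*a)*(1-k*a*q*x^2)*(1+x^3))*(q^2*x)
         + (1-k*q*y+k*q^2*y^2)*(1-k*y)*((1-k*a)*d*d'*(1+x^3))*(q^2*x))"
    unfolding rec_coeff_hi_def rec_coeff_lo_def pw(1) T1 T0 using nz \<open>q \<noteq> 0\<close> by (simp add: field_simps)
  also have "\<dots> = C/(q^2*x) * (- cert_poly q k (q*x) y*(1-k*a*q*x^2)*d
                               - cert_poly q k x y*(1-k*a)*d'*(q^2*x))"
    unfolding y_def d_def d'_def by (simp only: cert_identity_interior)
  also have "\<dots> = cert_term q k n (Suc j) - cert_term q k n j"
    unfolding G1 G0 using nz \<open>q \<noteq> 0\<close> by (simp add: field_simps)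
  finally show ?thesis .
qed

lemma telescoping_step_top:
  fixes q k :: "'a::field"
  assumes "q \<noteq> 0" and hq: "\<And>i::nat. i \<ge> 1 \<Longrightarrow> q ^ i \<noteq> 1" and "1 \<le> n"
  shows "rec_coeff_hi q k n * (pair_term q k (Suc n) n + pair_term q k (Suc n) (Suc n))
           - rec_coeff_lo q k n * pair_term q k n n
       = - cert_term q k n n"
proof -
  define x where "x = q ^ n"
  define E where "E = qpoch k q (n + n)"
  define P where "P = qpoch q q (n + n)"
  define d0 where "d0 = 1 - q"
  define d1 where "d1 = 1 - q * x^2"
  define d2 where "d2 = 1 - q^2 * x^2"
  define C where "C = E * alpha_base q n / (P * d0 * d1 * d2)"
  have pw: "q ^ (n + n) = x^2"
    unfolding x_def by (simp add: power_add power2_eq_square)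
  have idx: "Suc n - n = 1" "Suc n + n = Suc (n + n)" "Suc n + Suc n = Suc (Suc (n + n))"
    "n + 1 - n = 1"
    by auto
  have E: "qpoch k q 1 = 1 - k" "qpoch k q (Suc (n + n)) = E*(1-k*x^2)"
      "qpoch k q (Suc (Suc (n + n))) = E*(1-k*x^2)*(1-k*q*x^2)"
    and P: "qpoch q q 1 = d0" "qpoch q q (Suc (n + n)) = P*d1"
      "qpoch q q (Suc (Suc (n + n))) = P*d1*d2"
    unfolding E_def P_def d0_def d1_def d2_def using pw
    by (simp_all add: qpoch_Suc qpoch_def power2_eq_square mult_ac)
  have nz: "P \<noteq> 0" "d0 \<noteq> 0" "d1 \<noteq> 0" "d2 \<noteq> 0" "x \<noteq> 0"
  proof -
    show "P \<noteq> 0"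
      unfolding P_def using qpoch_self_nonzero[OF hq] .
    show "d0 \<noteq> 0"
      unfolding d0_def using hq[of 1] by auto
    have "q ^ Suc (n + n) \<noteq> 1"
      by (rule hq) simp
    then show "d1 \<noteq> 0"
      unfolding d1_def using pw by simp
    have "q ^ Suc (Suc (n + n)) \<noteq> 1"
      by (rule hq) simp
    then show "d2 \<noteq> 0"
      unfolding d2_def using pw by (simp add: power2_eq_square mult.assoc)
    show "x \<noteq> 0"
      using \<open>q \<noteq> 0\<close> by (simp add: x_def)
  qed
  have alpha: "pair_alpha q n = alpha_base q n * (1 + x^3)"
    using \<open>1 \<le> n\<close> by (simp add: pair_alpha_if_pos x_def)
  have alpha_Suc: "pair_alpha q (Suc n) = - alpha_base q n / (q^2 * x) * (1 + q^3 * x^3)"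
    using \<open>q \<noteq> 0\<close> pair_alpha_if_pos[of "Suc n" q]
    by (simp add: alpha_base_Suc x_def power_mult_distrib)
  note fold = E_def[symmetric] P_def[symmetric] x_def[symmetric]
  have T1: "pair_term q k (Suc n) n = C * ((1-k)*(1-k*x^2)*(1+x^3)*d2)"
    unfolding pair_term_def idx E P alpha fold C_def using nz by (simp add: field_simps)
  have T2: "pair_term q k (Suc n) (Suc n) = C * ((1-k*x^2)*(1-k*q*x^2)*d0*(1+q^3*x^3)) * (-1/(q^2*x))"
    unfolding pair_term_def idx diff_self_eq_0 E P alpha_Suc fold C_def
    using nz \<open>q \<noteq> 0\<close> by (simp add: field_simps)
  have T0: "pair_term q k n n = C * ((1+x^3)*d0*d1*d2)"
    unfolding pair_term_def idx diff_self_eq_0 E P alpha fold C_def using nz by (simp add: field_simps)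
  have G: "cert_term q k n n = C * (cert_poly q k x x * d1 * d2)"
    unfolding cert_term_def idx diff_self_eq_0 E P fold C_def
    using nz \<open>q \<noteq> 0\<close> \<open>1 \<le> n\<close> by (simp add: field_simps)
  have "rec_coeff_hi q k n * (pair_term q k (Suc n) n + pair_term q k (Suc n) (Suc n))
          - rec_coeff_lo q k n * pair_term q k n n
     = C/(q^2*x) * ((1-k*x+k*x^2)*(q^2*x)*(1-q*x)*((1-k)*(1-k*x^2)*(1+x^3)*d2*(q^2*x)
           - (1-k*x^2)*(1-k*q*x^2)*d0*(1+q^3*x^3))
       + (1-k*q*x+k*q^2*x^2)*(1-k*x)*(1+x^3)*d0*d1*d2*(q^2*x))"
    unfolding rec_coeff_hi_def rec_coeff_lo_def fold T1 T2 T0 using nz \<open>q \<noteq> 0\<close>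
    by (simp add: field_simps)
  also have "\<dots> = C/(q^2*x) * (- cert_poly q k x x*d1*d2*(q^2*x))"
    unfolding d0_def d1_def d2_def by (simp only: cert_identity_top)
  also have "\<dots> = - cert_term q k n n"
    unfolding G using nz \<open>q \<noteq> 0\<close> by (simp add: field_simps)
  finally show ?thesis .
qed

lemma pair_term_sum_recurrence:
  fixes q k :: "'a::field"
  assumes "q \<noteq> 0" and hq: "\<And>i::nat. i \<ge> 1 \<Longrightarrow> q ^ i \<noteq> 1" and "1 \<le> n"
  shows "rec_coeff_hi q k n * (\<Sum>j\<le>Suc n. pair_term q k (Suc n) j)
       = rec_coeff_lo q k n * (\<Sum>j\<le>n. pair_term q k n j)"
proof -
  let ?f = "\<lambda>j. rec_coeff_hi q k n * pair_term q k (Suc n) j - rec_coeff_lo q k n * pair_term q k n j"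
  have "?f j = cert_term q k n (Suc j) - cert_term q k n j" if "j < n" for j
  proof (cases "j = 0")
    case True
    then show ?thesis
      using telescoping_step_bottom[OF assms(1,2), of n "n - 1"] \<open>1 \<le> n\<close> by simp
  next
    case False
    then show ?thesis
      using telescoping_step_interior[OF assms(1,2), of j n "n - j - 1"] that by simp
  qed
  then have "(\<Sum>j<n. ?f j) = cert_term q k n n"
    using sum_lessThan_telescope[of "cert_term q k n" n] by (simp add: cert_term_def)
  then have "rec_coeff_hi q k n * (\<Sum>j\<le>Suc n. pair_term q k (Suc n) j)
       - rec_coeff_lo q k n * (\<Sum>j\<le>n. pair_term q k n j)
     = cert_term q k n n + (rec_coeff_hi q k n * (pair_term q k (Suc n) n + pair_term q k (Suc n) (Suc n))
           - rec_coeff_lo q k n * pair_term q k n n)"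
    by (simp add: lessThan_Suc_atMost[symmetric] sum_distrib_left sum_subtractf algebra_simps)
  also have "\<dots> = 0"
    using telescoping_step_top[OF assms] by simp
  finally show ?thesis
    by simp
qed

lemma pair_beta_recurrence:
  fixes q k :: "'a::field"
  assumes "q \<noteq> 0" and hq: "\<And>i::nat. i \<ge> 1 \<Longrightarrow> q ^ i \<noteq> 1"
  shows "rec_coeff_hi q k n * pair_beta q k (Suc n) = rec_coeff_lo q k n * pair_beta q k n"
proof -
  define y where "y = q ^ n"
  define E where "E = qpoch k q n"
  define P where "P = qpoch q q n"
  define Q where "Q = q ^ beta_exponent n"
  define d where "d = 1 - q * y"
  have nz: "P \<noteq> 0" "d \<noteq> 0" "Q \<noteq> 0" "y \<noteq> 0"
  proof -
    show "P \<noteq> 0"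
      unfolding P_def using qpoch_self_nonzero[OF hq] .
    have "q ^ Suc n \<noteq> 1"
      by (rule hq) simp
    then show "d \<noteq> 0"
      unfolding d_def y_def by simp
    show "Q \<noteq> 0" "y \<noteq> 0"
      using \<open>q \<noteq> 0\<close> by (simp_all add: Q_def y_def)
  qed
  have pw: "q ^ (2 * n) = y^2" "q ^ (2 * Suc n) = q^2 * y^2" "q ^ Suc n = q * y"
     "q ^ beta_exponent (Suc n) = Q * y * q^2"
    by (simp_all add: y_def Q_def power_add power_mult mult.commute[of 2] power_mult_distrib
        power2_eq_square mult_ac)
  have beta_Suc: "pair_beta q k (Suc n)
      = (-1) ^ Suc n * (1 - k*(q*y) + k*(q^2*y^2)) * (E*(1-k*y)) / ((Q*y*q^2) * (P*d))"
    unfolding pair_beta_def pw by (simp add: qpoch_Suc E_def P_def d_def y_def)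
  have beta: "pair_beta q k n = (-1) ^ n * (1 - k*y + k*y^2) * E / (Q * P)"
    by (simp add: pair_beta_def pw E_def P_def Q_def y_def)
  show ?thesis
    unfolding rec_coeff_hi_def rec_coeff_lo_def beta_Suc beta y_def[symmetric] d_def[symmetric]
    using nz \<open>q \<noteq> 0\<close> by (simp add: field_simps)
qed

lemma pair_term_sum_one:
  fixes q k :: "'a::field"
  assumes "q \<noteq> 0" and hq: "\<And>i::nat. i \<ge> 1 \<Longrightarrow> q ^ i \<noteq> 1"
  shows "(\<Sum>j\<le>1. pair_term q k 1 j) = pair_beta q k 1"
proof -
  define u where "u = 1 - q"
  define v where "v = 1 - q * q"
  have "u \<noteq> 0" "v \<noteq> 0"
    using hq[of 1] hq[of 2] by (auto simp: u_def v_def power2_eq_square)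
  have exp_1: "beta_exponent 1 = 2"
    by (simp add: numeral_2_eq_2)
  have numerator: "(1-k)*(1-k)*(q*q)*v - (1-k)*(1-k*q)*(1+q^3)*u = -(1 - k*q + k*q^2)*(1-k)*u*v"
    unfolding u_def v_def by algebra
  have "(\<Sum>j\<le>1. pair_term q k 1 j) = (1-k)*(1-k)/(u*u) - (1-k)*(1-k*q)*(1+q^3)/(u*v*(q*q))"
    by (simp add: pair_term_def pair_alpha_def alpha_base_def exp_1 qpoch_Suc numeral_2_eq_2
        u_def v_def)
  also have "\<dots> = ((1-k)*(1-k)*(q*q)*v - (1-k)*(1-k*q)*(1+q^3)*u) / (u*u*v*(q*q))"
    using \<open>u \<noteq> 0\<close> \<open>v \<noteq> 0\<close> \<open>q \<noteq> 0\<close> by (simp add: field_simps)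
  also have "\<dots> = -(1 - k*q + k*q^2)*(1-k)/(q^2*u)"
    unfolding numerator using \<open>u \<noteq> 0\<close> \<open>v \<noteq> 0\<close> \<open>q \<noteq> 0\<close>
    by (simp add: field_simps power2_eq_square)
  also have "\<dots> = pair_beta q k 1"
    by (simp add: pair_beta_def exp_1 qpoch_Suc power2_eq_square u_def)
  finally show ?thesis .
qed

lemma finite_rec_coeff_hi_zeros:
  fixes q :: "'a::field"
  assumes "q \<noteq> 0" and hq: "\<And>i::nat. i \<ge> 1 \<Longrightarrow> q ^ i \<noteq> 1" and "1 \<le> n"
  shows "finite {k. rec_coeff_hi q k n = 0}"
proof -
  define y where "y = q ^ n"
  have "y \<noteq> 0" "y \<noteq> 1" "1 - q * y \<noteq> 0"
    using \<open>q \<noteq> 0\<close> hq[OF \<open>1 \<le> n\<close>] hq[of "Suc n"] by (simp_all add: y_def)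
  then have "y^2 - y \<noteq> 0"
    by (simp add: power2_eq_square right_diff_distrib[symmetric])
  have factor: "rec_coeff_hi q k n = (1 + k * (y^2 - y)) * (q^2 * y) * (1 - q * y)" for k
    by (simp add: rec_coeff_hi_def algebra_simps flip: y_def)
  have "{k. rec_coeff_hi q k n = 0} \<subseteq> {- 1 / (y^2 - y)}"
  proof
    fix k
    assume "k \<in> {k. rec_coeff_hi q k n = 0}"
    then have "1 + k * (y^2 - y) = 0"
      using \<open>q \<noteq> 0\<close> \<open>y \<noteq> 0\<close> \<open>1 - q * y \<noteq> 0\<close> by (simp add: factor)
    with \<open>y^2 - y \<noteq> 0\<close> show "k \<in> {- 1 / (y^2 - y)}"
      by (simp add: field_simps add_eq_0_iff)
  qed
  then show ?thesis
    by (rule finite_subset) simp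
qed

lemma pair_term_sum_eq_pair_beta:
  fixes q k :: "'a::field"
  assumes "q \<noteq> 0" and hq: "\<And>i::nat. i \<ge> 1 \<Longrightarrow> q ^ i \<noteq> 1"
  shows "(\<Sum>j\<le>n. pair_term q k n j) = pair_beta q k n"
proof (induction n arbitrary: k)
  case 0
  show ?case
    by (simp add: pair_term_def pair_alpha_def pair_beta_def)
next
  case (Suc n)
  show ?case
  proof (cases "n = 0")
    case True
    then show ?thesis
      using pair_term_sum_one[OF assms] by simp
  next
    case False
    then have "1 \<le> n"
      by simp
    let ?E = "{k. rec_coeff_hi q k n = 0}"
    have zeros: "(\<Sum>j\<le>Suc n. pair_term q k' (Suc n) j) - pair_beta q k' (Suc n) = 0"
      if "k' \<notin> ?E" for k'
    proof -
      have "rec_coeff_hi q k' n * (\<Sum>j\<le>Suc n. pair_term q k' (Suc n) j)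
          = rec_coeff_hi q k' n * pair_beta q k' (Suc n)"
        using pair_term_sum_recurrence[OF assms \<open>1 \<le> n\<close>, of k'] Suc.IH[of k']
          pair_beta_recurrence[OF assms, of k' n]
        by (simp only:)
      with that show ?thesis
        by simp
    qed
    have "poly_fun (\<lambda>k. (\<Sum>j\<le>Suc n. pair_term q k (Suc n) j) - pair_beta q k (Suc n))"
      unfolding pair_term_def pair_beta_def
      by ((simp only: nat.distinct if_False),
          intro poly_fun_diff poly_fun_sum poly_fun_mult poly_fun_divide_const poly_fun_qpoch
          poly_fun_const poly_fun_add poly_fun_id finite_atMost)
    from poly_fun_eq_0_if_cofinite_zeros[OF infinite_UNIV_if_not_root_of_unity[OF assms]
        this finite_rec_coeff_hi_zeros[OF assms \<open>1 \<le> n\<close>] zeros]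
    show ?thesis
      by simp
  qed
qed

lemma pair_alpha_eq_power_int:
  fixes q :: "'a::field"
  assumes "q \<noteq> 0"
  shows "pair_alpha q n = (if n = 0 then 1
     else (-1) ^ n * (q powi (- ((int n ^ 2 + 3 * int n) div 2))
                      + q powi ((3 * int n - int n ^ 2) div 2)))"
proof -
  define e where "e = beta_exponent n"
  have "int n ^ 2 + 3 * int n = 2 * int e"
    unfolding e_def using arg_cong[OF two_beta_exponent[of n], of int] by simp
  then have exp: "(int n ^ 2 + 3 * int n) div 2 = int e"
    "(3 * int n - int n ^ 2) div 2 = int (3 * n) - int e"
    by simp_all
  have power: "q powi (int (3 * n) - int e) = q ^ (3 * n) / q ^ e"
    by (simp only: power_int_diff[OF disjI1[OF \<open>q \<noteq> 0\<close>]] power_int_of_nat)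
  show ?thesis
    unfolding exp power power_int_minus power_int_of_nat
    by (simp add: pair_alpha_def alpha_base_def distrib_left add_divide_distrib divide_inverse flip: e_def)
qed

lemma pair_beta_eq_div:
  "pair_beta q k n = (if n = 0 then 1
     else ((-1) ^ n * (1 - k * q ^ n + k * q ^ (2 * n)) * qpoch k q n)
          / (q ^ ((n ^ 2 + 3 * n) div 2) * qpoch q q n))"
proof -
  have "(n ^ 2 + 3 * n) div 2 = beta_exponent n"
    using two_beta_exponent[of n] by simp
  then show ?thesis
    by (simp add: pair_beta_def)
qed

theorem mainTheorem7:
  fixes q k :: "'a::field"
  assumes "q \<noteq> 0"
    and "\<And>i::nat. i \<ge> 1 \<Longrightarrow> q ^ i \<noteq> 1"
  shows "WP_Bailey_pair 1 k q
     (\<lambda>n. if n = 0 then 1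
          else (-1) ^ n * (q powi (- ((int n ^ 2 + 3 * int n) div 2))
                           + q powi ((3 * int n - int n ^ 2) div 2)))
     (\<lambda>n. if n = 0 then 1
          else ((-1) ^ n * (1 - k * q ^ n + k * q ^ (2 * n)) * qpoch k q n)
               / (q ^ ((n ^ 2 + 3 * n) div 2) * qpoch q q n))"
  using pair_term_sum_eq_pair_beta[OF assms]
  unfolding WP_Bailey_pair_def pair_alpha_eq_power_int[OF assms(1), symmetric]
    pair_beta_eq_div[symmetric]
  by (simp add: pair_term_def pair_alpha_def)
end
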